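(* Let $\lambda$ be a nonzero real number. For every integer $n\ge 0$, $$\sum_{k=0}^{n}S_{2,\lambda}(n,k)\,2^{-k}(-1)^{k}k!=W_{n,\lambda}\!\left(-\tfrac{1}{2}\right)=\frac{2}{n+1}\Big(\beta_{n+1,\lambda}-2^{n+1}\beta_{n+1,\frac{\lambda}{2}}\Big).$$
   Context: For nonzero $\lambda\in\mathbb{R}$, $e_{\lambda}(t)=(1+\lambda t)^{1/\lambda}$; $(x)_{0,\lambda}=1$, $(x)_{n,\lambda}=x(x-\lambda)\cdots(x-(n-1)\lambda)$ for $n\ge1$; $(x)_0=1$, $(x)_n=x(x-1)\cdots(x-n+1)$. The degenerate Stirling numbers of the second kind $S_{2,\lambda}(n,k)$ are defined by $(x)_{n,\lambda}=\sum_{k=0}^{n}S_{2,\lambda}(n,k)(x)_{k}$. The degenerate geometric polynomials are $W_{n,\lambda}(x)=\sum_{k=0}^{n}S_{2,\lambda}(n,k)\,k!\,x^{k}$. The Carlitz degenerate Bernoulli numbers $\beta_{n,\mu}$ (for nonzero $\mu$) are defined by $\frac{t}{e_{\mu}(t)-1}=\sum_{n=0}^{\infty}\beta_{n,\mu}\frac{t^{n}}{n!}$. *)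

theory Defs
  imports "HOL-Analysis.Analysis"
begin

text \<open>Degenerate exponential e_lambda(t) = (1 + lambda t)^(1/lambda) (real power; meaningful for 1 + lambda t > 0).\<close>
definition deg_exp :: "real \<Rightarrow> real \<Rightarrow> real" where
  "deg_exp lam t = (1 + lam * t) powr (1 / lam)"

definition deg_ff :: "real \<Rightarrow> real \<Rightarrow> nat \<Rightarrow> real" where
  "deg_ff lam x n = (\<Prod>i<n. x - real i * lam)"

definition ffac :: "real \<Rightarrow> nat \<Rightarrow> real" where
  "ffac x n = (\<Prod>i<n. x - real i)"

definition deg_stirling2 :: "real \<Rightarrow> nat \<Rightarrow> nat \<Rightarrow> real" where
  "deg_stirling2 lam n = (THE c. (\<forall>x. deg_ff lam x n = (\<Sum>k\<le>n. c k * ffac x k))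
                                 \<and> (\<forall>k>n. c k = 0))"

definition deg_geom :: "real \<Rightarrow> nat \<Rightarrow> real \<Rightarrow> real" where
  "deg_geom lam n x = (\<Sum>k\<le>n. deg_stirling2 lam n k * fact k * x ^ k)"

definition carlitz_bernoulli :: "real \<Rightarrow> nat \<Rightarrow> real" where
  "carlitz_bernoulli mu = (THE b. \<exists>r>0. \<forall>t. 0 < \<bar>t\<bar> \<and> \<bar>t\<bar> < r \<longrightarrow>
       (\<lambda>n. b n * t ^ n / fact n) sums (t / (deg_exp mu t - 1)))"

end

(*
  Everything is compared through exponential generating functions in t. Write E = e_lambda(t).
  The degenerate Stirling numbers have the generating function
  sum_n S_{2,lambda}(n,k) t^n/n! = (E - 1)^k / k!, because (E - 1)^k satisfies the same
  recurrence, coming from the differential equation (1 + lambda t) E' = E. Summing the geometric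
  series, sum_n W_{n,lambda}(x) t^n/n! = 1 / (1 - x (E - 1)), which is 2 / (E + 1) at x = -1/2.
  On the Bernoulli side, the binomial series gives e_lambda(t)^2 = e_{lambda/2}(2t), so
  t/(e_lambda(t) - 1) - 2t/(e_{lambda/2}(2t) - 1) = t/(E - 1) - 2t/(E^2 - 1) = t/(E + 1),
  and comparing the coefficients of t^(n+1) gives the identity. Analysis is needed only to
  identify the Carlitz numbers, defined through a convergent expansion, with the coefficients of
  the formal series t/(E - 1): two power series that agree near 0 are equal.
*)
theory Submission
  imports Defs
begin

lemma fps_nth_linear_times_deriv:
  "fps_nth ((1 + fps_const l * fps_X) * fps_deriv G) n
     = of_nat (n + 1) * fps_nth G (n + 1) + l * of_nat n * fps_nth G n"
  by (cases n) (simp_all add: distrib_right mult.assoc)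

lemma fps_nth_inverse_one_minus_const_times:
  fixes D :: "'a :: field fps"
  assumes "fps_nth D 0 = 0"
  shows "fps_nth (inverse (1 - fps_const c * D)) n = (\<Sum>k\<le>n. c ^ k * fps_nth (D ^ k) n)"
proof -
  define G :: "'a fps" where "G = Abs_fps (\<lambda>k. c ^ k)"
  have "G * (1 - fps_const c * fps_X) = G - fps_const c * (fps_X * G)"
    by (simp add: algebra_simps)
  also have "\<dots> = 1"
  proof (rule fps_ext)
    show "fps_nth (G - fps_const c * (fps_X * G)) k = fps_nth 1 k" for k
      by (cases k) (simp_all add: G_def)
  qed
  finally have "(G oo D) * (1 - fps_const c * D) = 1"
    using fps_compose_mult_distrib[OF assms, of G "1 - fps_const c * fps_X"] assms
    by (simp add: fps_compose_sub_distrib fps_const_mult_apply_left[symmetric])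
  then have "inverse (1 - fps_const c * D) = G oo D"
    by (intro fps_inverse_unique) (simp add: mult.commute)
  then show ?thesis
    by (simp add: fps_compose_nth G_def atLeast0AtMost)
qed

lemma fps_conv_radius_pos_of_summable:
  fixes F :: "real fps"
  assumes "r > 0"
    and "\<And>t. 0 < \<bar>t\<bar> \<Longrightarrow> \<bar>t\<bar> < r \<Longrightarrow> summable (\<lambda>n. fps_nth F n * t ^ n)"
  shows "fps_conv_radius F > 0"
proof -
  have "ereal (r / 2) \<le> fps_conv_radius F"
    using assms(1) assms(2)[of "r / 2"] unfolding fps_conv_radius_def by (auto dest: conv_radius_geI)
  then show ?thesis
    using assms(1) by (auto intro: less_le_trans[rotated])
qed

lemma fps_eq_0_of_eval_eventually_0:
  fixes H :: "'a :: {banach, real_normed_field} fps"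
  assumes "fps_conv_radius H > 0" and "eventually (\<lambda>z. eval_fps H z = 0) (at 0)"
  shows "H = 0"
proof (rule ccontr)
  assume "H \<noteq> 0"
  define k where "k = subdegree H"
  define g where "g = (\<lambda>z. if z = 0 then fps_nth H k else eval_fps H z / z ^ k)"
  have "g has_fps_expansion fps_shift k H"
    unfolding g_def using assms(1)
    by (intro has_fps_expansion_shift eval_fps_has_fps_expansion) (simp_all add: k_def)
  then have "(g \<longlongrightarrow> g 0) (at 0)"
    using has_fps_expansion_imp_continuous continuous_at by blast
  moreover have "g 0 \<noteq> 0"
    using \<open>H \<noteq> 0\<close> by (simp add: g_def k_def)
  ultimately have "eventually (\<lambda>z. g z \<noteq> 0) (at 0)"
    by (rule tendsto_imp_eventually_ne)
  moreover have "eventually (\<lambda>z. g z = 0) (at 0)"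
    using assms(2) unfolding eventually_at_filter by eventually_elim (simp add: g_def)
  ultimately have "eventually (\<lambda>z. False) (at (0 :: 'a))"
    by eventually_elim simp
  then show False
    by simp
qed

lemma fps_eqI_eval_eventually_eq:
  fixes F G :: "'a :: {banach, real_normed_field} fps"
  assumes "fps_conv_radius F > 0" and "fps_conv_radius G > 0"
    and "eventually (\<lambda>z. eval_fps F z = eval_fps G z) (at 0)"
  shows "F = G"
proof -
  have "eventually (\<lambda>z. z \<in> eball 0 (min (fps_conv_radius F) (fps_conv_radius G))) (at 0)"
    using assms(1,2) by (intro eventually_at_in_open') (auto simp: zero_ereal_def)
  with assms(3) have "eventually (\<lambda>z. eval_fps (F - G) z = 0) (at 0)"
    by eventually_elim (simp add: eval_fps_diff)
  moreover have "fps_conv_radius (F - G) > 0"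
    using assms(1,2) fps_conv_radius_diff[of F G] by (auto intro: less_le_trans[rotated])
  ultimately show ?thesis
    using fps_eq_0_of_eval_eventually_0 by force
qed

definition deg_exp_fps :: "real \<Rightarrow> real fps" where
  "deg_exp_fps l = fps_binomial (1 / l) oo (fps_const l * fps_X)"

lemma deg_exp_fps_nth: "fps_nth (deg_exp_fps l) n = ((1 / l) gchoose n) * l ^ n"
  by (simp add: deg_exp_fps_def)

lemma deg_exp_fps_nth_0 [simp]: "fps_nth (deg_exp_fps l) 0 = 1"
  by (simp add: deg_exp_fps_nth)

lemma deg_exp_fps_nth_1 [simp]: "l \<noteq> 0 \<Longrightarrow> fps_nth (deg_exp_fps l) 1 = 1"
  by (simp add: deg_exp_fps_nth)

lemma deg_exp_fps_minus_1_nonzero: "l \<noteq> 0 \<Longrightarrow> deg_exp_fps l - 1 \<noteq> 0"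
  by (metis deg_exp_fps_nth_1 fps_one_nth fps_sub_nth fps_zero_nth one_neq_zero diff_zero)

lemma deg_exp_fps_plus_1_nonzero: "deg_exp_fps l + 1 \<noteq> 0"
  by (metis deg_exp_fps_nth_0 fps_add_nth fps_one_nth fps_zero_nth one_add_one zero_neq_numeral)

lemma deg_exp_fps_ode:
  assumes "l \<noteq> 0"
  shows "(1 + fps_const l * fps_X) * fps_deriv (deg_exp_fps l) = deg_exp_fps l"
proof (rule fps_ext)
  fix n
  let ?E = "deg_exp_fps l"
  have "of_nat (Suc n) * ((1 / l) gchoose Suc n) = (1 / l - of_nat n) * ((1 / l) gchoose n)"
    using gbinomial_mult_1[of "1 / l" n] by (simp add: algebra_simps)
  then have "of_nat (Suc n) * fps_nth ?E (Suc n)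
      = l ^ Suc n * ((1 / l - of_nat n) * ((1 / l) gchoose n))"
    by (simp add: deg_exp_fps_nth)
  also have "\<dots> = (1 - l * of_nat n) * fps_nth ?E n"
    using assms by (simp add: deg_exp_fps_nth field_simps)
  finally show "fps_nth ((1 + fps_const l * fps_X) * fps_deriv ?E) n = fps_nth ?E n"
    unfolding fps_nth_linear_times_deriv by (simp add: algebra_simps)
qed

lemma deg_exp_fps_minus_1_power_ode:
  assumes "l \<noteq> 0"
  shows "(1 + fps_const l * fps_X) * fps_deriv ((deg_exp_fps l - 1) ^ Suc m)
           = fps_const (of_nat (Suc m)) * ((deg_exp_fps l - 1) ^ Suc m + (deg_exp_fps l - 1) ^ m)"
proof -
  let ?D = "deg_exp_fps l - 1"
  have "fps_deriv (?D ^ Suc m) = fps_const (of_nat (Suc m)) * fps_deriv (deg_exp_fps l) * ?D ^ m"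
    using fps_deriv_power[of ?D "Suc m"] by simp
  then have "(1 + fps_const l * fps_X) * fps_deriv (?D ^ Suc m)
      = fps_const (of_nat (Suc m)) * ?D ^ m * ((1 + fps_const l * fps_X) * fps_deriv (deg_exp_fps l))"
    by (simp only: mult_ac)
  also have "\<dots> = fps_const (of_nat (Suc m)) * ?D ^ m * (?D + 1)"
    using deg_exp_fps_ode[OF assms] by simp
  finally show ?thesis
    by (simp add: algebra_simps)
qed

lemma deg_exp_fps_power2:
  assumes "l \<noteq> 0"
  shows "deg_exp_fps l ^ 2 = deg_exp_fps (l / 2) oo (fps_const 2 * fps_X)"
proof -
  have "(fps_const (l / 2) * fps_X) oo (fps_const 2 * fps_X) = fps_const l * fps_X"
    by (rule fps_ext) (auto simp: fps_X_nth le_Suc_eq)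
  then have "deg_exp_fps (l / 2) oo (fps_const 2 * fps_X)
      = fps_binomial (2 / l) oo (fps_const l * fps_X)"
    using fps_compose_assoc[of "fps_const 2 * fps_X" "fps_const (l / 2) * fps_X" "fps_binomial (2 / l)"]
    by (simp add: deg_exp_fps_def)
  also have "\<dots> = deg_exp_fps l ^ 2"
    by (simp add: deg_exp_fps_def fps_compose_power fps_binomial_power)
  finally show ?thesis ..
qed

lemma deg_exp_fps_sums:
  assumes "l \<noteq> 0" and "\<bar>l * t\<bar> < 1"
  shows "(\<lambda>n. fps_nth (deg_exp_fps l) n * t ^ n) sums deg_exp l t"
  using gen_binomial_real[OF assms(2), of "1 / l"]
  by (simp add: deg_exp_fps_nth deg_exp_def power_mult_distrib mult_ac)

lemma has_fps_expansion_deg_exp: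
  assumes "l \<noteq> 0"
  shows "deg_exp l has_fps_expansion deg_exp_fps l"
proof -
  define r where "r = 1 / \<bar>l\<bar>"
  have small: "\<bar>l * t\<bar> < 1" if "\<bar>t\<bar> < r" for t
    using that assms by (simp add: r_def abs_mult field_simps)
  have r: "r > 0"
    using assms by (simp add: r_def)
  then have "fps_conv_radius (deg_exp_fps l) > 0"
    using deg_exp_fps_sums[OF assms small] sums_summable
    by (blast intro: fps_conv_radius_pos_of_summable)
  moreover have "eventually (\<lambda>t. t \<in> ball 0 r) (nhds (0 :: real))"
    using r by (intro eventually_nhds_in_open) auto
  then have "eventually (\<lambda>t. eval_fps (deg_exp_fps l) t = deg_exp l t) (nhds 0)"
    by eventually_elim
      (use deg_exp_fps_sums[OF assms small] in \<open>auto simp: eval_fps_def sums_iff\<close>)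
  ultimately show ?thesis
    by (simp add: has_fps_expansion_def)
qed

fun deg_Stirling :: "real \<Rightarrow> nat \<Rightarrow> nat \<Rightarrow> real" where
  "deg_Stirling l 0 k = (if k = 0 then 1 else 0)"
| "deg_Stirling l (Suc n) k =
     (if k = 0 then 0 else deg_Stirling l n (k - 1)) + (real k - real n * l) * deg_Stirling l n k"

lemma deg_Stirling_eq_0: "n < k \<Longrightarrow> deg_Stirling l n k = 0"
  by (induction n arbitrary: k) auto

lemma deg_ff_eq_sum_deg_Stirling: "deg_ff l x n = (\<Sum>k\<le>n. deg_Stirling l n k * ffac x k)"
proof (induction n)
  case 0
  then show ?case
    by (simp add: deg_ff_def ffac_def)
next
  case (Suc n)
  let ?S = "deg_Stirling l n"
  have "deg_ff l x (Suc n) = (\<Sum>k\<le>n. ?S k * ffac x k * (x - real n * l))"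
    by (simp add: deg_ff_def Suc[unfolded deg_ff_def] sum_distrib_right)
  also have "\<dots> = (\<Sum>k\<le>n. ?S k * ffac x (Suc k))
                  + (\<Sum>k\<le>n. (real k - real n * l) * ?S k * ffac x k)"
    by (simp add: ffac_def sum.distrib[symmetric] algebra_simps)
  also have "(\<Sum>k\<le>n. ?S k * ffac x (Suc k))
           = (\<Sum>k\<le>Suc n. (if k = 0 then 0 else ?S (k - 1)) * ffac x k)"
    by (subst sum.atMost_Suc_shift) simp
  also have "(\<Sum>k\<le>n. (real k - real n * l) * ?S k * ffac x k)
           = (\<Sum>k\<le>Suc n. (real k - real n * l) * ?S k * ffac x k)"
    by (simp add: deg_Stirling_eq_0)
  finally show ?case
    by (simp add: sum.distrib[symmetric] algebra_simps)
qed

lemma ffac_linear_independent: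
  assumes "\<And>x. (\<Sum>j\<le>n. e j * ffac x j) = 0" and "k \<le> n"
  shows "e k = 0"
  using assms(2)
proof (induction k rule: less_induct)
  case (less k)
  have "ffac (real k) j = 0" if "k < j" for j
    unfolding ffac_def using that by (intro prod_zero) auto
  moreover have "ffac (real k) k \<noteq> 0"
    unfolding ffac_def by (intro prod_pos[THEN less_imp_neq, THEN not_sym]) auto
  moreover have "(\<Sum>j\<le>n. e j * ffac (real k) j) = (\<Sum>j\<in>{k}. e j * ffac (real k) j)"
    by (rule sum.mono_neutral_right) (use less calculation(1) in \<open>auto simp: nat_neq_iff\<close>)
  ultimately show ?case
    using assms(1)[of "real k"] by simp
qed

lemma deg_stirling2_eq_deg_Stirling: "deg_stirling2 l n = deg_Stirling l n"
  unfolding deg_stirling2_def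
proof (rule the_equality)
  show "(\<forall>x. deg_ff l x n = (\<Sum>k\<le>n. deg_Stirling l n k * ffac x k))
        \<and> (\<forall>k>n. deg_Stirling l n k = 0)"
    using deg_ff_eq_sum_deg_Stirling deg_Stirling_eq_0 by blast
next
  fix c
  assume c: "(\<forall>x. deg_ff l x n = (\<Sum>k\<le>n. c k * ffac x k)) \<and> (\<forall>k>n. c k = 0)"
  have diff: "\<And>x. (\<Sum>j\<le>n. (c j - deg_Stirling l n j) * ffac x j) = 0"
    using c deg_ff_eq_sum_deg_Stirling by (simp add: sum_subtractf algebra_simps)
  have "c k = deg_Stirling l n k" if "k \<le> n" for k
    using ffac_linear_independent[OF diff that] by simp
  then show "c = deg_Stirling l n"
    using c deg_Stirling_eq_0 by (metis ext not_le)
qed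

lemma deg_Stirling_fps:
  assumes "l \<noteq> 0"
  shows "deg_Stirling l n k = fact n / fact k * fps_nth ((deg_exp_fps l - 1) ^ k) n"
proof (induction n arbitrary: k)
  case 0
  then show ?case
    by (simp add: fps_nth_power_0)
next
  case (Suc n)
  define d where "d j i = fps_nth ((deg_exp_fps l - 1) ^ j) i" for j i
  show ?case
  proof (cases k)
    case 0
    then show ?thesis
      using Suc.IH[of 0] by (cases "n = 0") (auto simp: d_def)
  next
    case (Suc m)
    have rec: "of_nat (Suc n) * d k (Suc n) = of_nat k * (d k n + d m n) - l * of_nat n * d k n"
      using arg_cong[OF deg_exp_fps_minus_1_power_ode[OF assms, of m], of "\<lambda>F. fps_nth F n"]
      unfolding fps_nth_linear_times_deriv fps_mult_left_const_nth fps_add_nth d_def \<open>k = Suc m\<close>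
      by (simp add: algebra_simps)
    have "deg_Stirling l (Suc n) k
        = fact n / fact m * d m n + (real k - real n * l) * (fact n / fact k * d k n)"
      using Suc.IH[of m] Suc.IH[of k] \<open>k = Suc m\<close> by (simp add: d_def)
    also have "\<dots> = fact n / fact k * (of_nat k * (d k n + d m n) - l * of_nat n * d k n)"
      using \<open>k = Suc m\<close> by (simp add: field_simps del: of_nat_Suc)
    also have "\<dots> = fact (Suc n) / fact k * d k (Suc n)"
      unfolding rec[symmetric] by (simp add: fact_Suc del: of_nat_Suc)
    finally show ?thesis
      by (simp add: d_def)
  qed
qed

lemma deg_geom_eq_fps_nth:
  assumes "l \<noteq> 0"
  shows "deg_geom l n x = fact n * fps_nth (inverse (1 - fps_const x * (deg_exp_fps l - 1))) n"
  by (simp add: fps_nth_inverse_one_minus_const_times deg_geom_def deg_stirling2_eq_deg_Stirling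
      deg_Stirling_fps[OF assms] sum_distrib_left mult_ac)

text \<open>This is the series \<open>t / (e\<^sub>\<lambda>(t) - 1)\<close>. Formal power series do not form a field,
  so it is written as the inverse of \<open>(e\<^sub>\<lambda>(t) - 1) / t\<close>, which has constant term 1.\<close>
definition carlitz_bernoulli_fps :: "real \<Rightarrow> real fps" where
  "carlitz_bernoulli_fps l = inverse (fps_shift 1 (deg_exp_fps l - 1))"

lemma deg_exp_fps_minus_1_times_carlitz_bernoulli_fps:
  assumes "l \<noteq> 0"
  shows "(deg_exp_fps l - 1) * carlitz_bernoulli_fps l = fps_X"
proof -
  have "deg_exp_fps l - 1 = fps_shift 1 (deg_exp_fps l - 1) * fps_X"
    using deg_exp_fps_minus_1_nonzero[OF assms]
    by (intro fps_shift_times_fps_X[symmetric] subdegree_geI) auto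
  moreover have "fps_shift 1 (deg_exp_fps l - 1) * carlitz_bernoulli_fps l = 1"
    using assms by (simp add: carlitz_bernoulli_fps_def inverse_mult_eq_1' deg_exp_fps_nth)
  ultimately show ?thesis
    by (metis mult.commute mult.left_commute mult_1_right)
qed

lemma has_fps_expansion_carlitz_bernoulli_fps:
  assumes "l \<noteq> 0"
  shows "(\<lambda>t. if t = 0 then 1 else t / (deg_exp l t - 1)) has_fps_expansion carlitz_bernoulli_fps l"
proof -
  have "(\<lambda>t. deg_exp l t - 1) has_fps_expansion deg_exp_fps l - 1"
    by (intro has_fps_expansion_diff has_fps_expansion_deg_exp[OF assms] has_fps_expansion_1)
  then have "(\<lambda>t. if t = 0 then 1 else (deg_exp l t - 1) / t ^ 1)
               has_fps_expansion fps_shift 1 (deg_exp_fps l - 1)"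
    using deg_exp_fps_minus_1_nonzero[OF assms] assms
    by (intro has_fps_expansion_shift) (auto intro: subdegree_geI simp: deg_exp_fps_nth)
  then have "(\<lambda>t. inverse (if t = 0 then 1 else (deg_exp l t - 1) / t ^ 1))
               has_fps_expansion carlitz_bernoulli_fps l"
    unfolding carlitz_bernoulli_fps_def using assms
    by (intro has_fps_expansion_inverse) (simp_all add: deg_exp_fps_nth)
  moreover have "(\<lambda>t. inverse (if t = 0 then 1 else (deg_exp l t - 1) / t ^ 1))
                = (\<lambda>t. if t = 0 then 1 else t / (deg_exp l t - 1))"
    by auto
  ultimately show ?thesis
    by simp
qed

lemma carlitz_bernoulli_fps_unique:
  assumes "l \<noteq> 0" and "r > 0"
    and sums: "\<And>t. 0 < \<bar>t\<bar> \<Longrightarrow> \<bar>t\<bar> < r \<Longrightarrow>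
                 (\<lambda>n. b n * t ^ n / fact n) sums (t / (deg_exp l t - 1))"
  shows "Abs_fps (\<lambda>n. b n / fact n) = carlitz_bernoulli_fps l"
proof (rule fps_eqI_eval_eventually_eq)
  let ?F = "Abs_fps (\<lambda>n. b n / fact n)"
  have F_sums: "(\<lambda>n. fps_nth ?F n * t ^ n) sums (t / (deg_exp l t - 1))"
    if "0 < \<bar>t\<bar>" "\<bar>t\<bar> < r" for t
    using sums[OF that] by simp
  then show "fps_conv_radius ?F > 0"
    using \<open>r > 0\<close> sums_summable by (blast intro: fps_conv_radius_pos_of_summable)
  have expansion:
    "(\<lambda>t. if t = 0 then 1 else t / (deg_exp l t - 1)) has_fps_expansion carlitz_bernoulli_fps l"
    by (rule has_fps_expansion_carlitz_bernoulli_fps[OF assms(1)])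
  then show "fps_conv_radius (carlitz_bernoulli_fps l) > 0"
    by (simp add: has_fps_expansion_def)
  have "eventually (\<lambda>t. eval_fps (carlitz_bernoulli_fps l) t
                        = (if t = 0 then 1 else t / (deg_exp l t - 1))) (at 0)"
    using expansion unfolding has_fps_expansion_def eventually_at_filter by (auto elim: eventually_mono)
  moreover have "eventually (\<lambda>t. t \<in> ball 0 r) (at (0 :: real))"
    using \<open>r > 0\<close> by (intro eventually_at_in_open') auto
  moreover have "eventually (\<lambda>t. t \<noteq> 0) (at (0 :: real))"
    by (rule eventually_neq_at_within)
  ultimately show "eventually (\<lambda>t. eval_fps ?F t = eval_fps (carlitz_bernoulli_fps l) t) (at 0)"
  proof eventually_elim
    case (elim t)
    then have "eval_fps ?F t = t / (deg_exp l t - 1)"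
      using F_sums[of t] by (simp add: eval_fps_def sums_iff)
    with elim show ?case
      by simp
  qed
qed

lemma carlitz_bernoulli_eq_fps_nth:
  assumes "l \<noteq> 0"
  shows "carlitz_bernoulli l n = fact n * fps_nth (carlitz_bernoulli_fps l) n"
proof -
  let ?B = "carlitz_bernoulli_fps l"
  have expansion: "(\<lambda>t. if t = 0 then 1 else t / (deg_exp l t - 1)) has_fps_expansion ?B"
    by (rule has_fps_expansion_carlitz_bernoulli_fps[OF assms])
  then have "eventually (\<lambda>t. t \<in> eball 0 (fps_conv_radius ?B)
               \<and> eval_fps ?B t = (if t = 0 then 1 else t / (deg_exp l t - 1))) (nhds 0)"
    unfolding has_fps_expansion_def
    by (intro eventually_conj eventually_nhds_in_open) (auto simp: zero_ereal_def)
  then obtain r where "r > 0" and r: "\<And>t. \<bar>t\<bar> < r \<Longrightarrow> t \<in> eball 0 (fps_conv_radius ?B)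
               \<and> eval_fps ?B t = (if t = 0 then 1 else t / (deg_exp l t - 1))"
    unfolding eventually_nhds_metric dist_real_def by auto
  have "(\<lambda>n. fact n * fps_nth ?B n * t ^ n / fact n) sums (t / (deg_exp l t - 1))"
    if "0 < \<bar>t\<bar>" "\<bar>t\<bar> < r" for t
    using sums_eval_fps[of t ?B] r[of t] that by simp
  then have "carlitz_bernoulli l = (\<lambda>n. fact n * fps_nth ?B n)"
    unfolding carlitz_bernoulli_def
  proof (intro the_equality exI conjI allI impI)
    fix b
    assume "\<exists>r>0. \<forall>t. 0 < \<bar>t\<bar> \<and> \<bar>t\<bar> < r \<longrightarrow>
              (\<lambda>n. b n * t ^ n / fact n) sums (t / (deg_exp l t - 1))"
    then have "Abs_fps (\<lambda>n. b n / fact n) = ?B"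
      using carlitz_bernoulli_fps_unique[OF assms] by blast
    then have "b n / fact n = fps_nth ?B n" for n
      by (metis fps_nth_Abs_fps)
    then show "b = (\<lambda>n. fact n * fps_nth ?B n)"
      by (simp add: fun_eq_iff field_simps)
  qed (use \<open>r > 0\<close> in auto)
  then show ?thesis
    by simp
qed

lemma carlitz_bernoulli_fps_duplication:
  assumes "l \<noteq> 0"
  shows "fps_X * inverse (1 - fps_const (- 1 / 2) * (deg_exp_fps l - 1))
           = 2 * (carlitz_bernoulli_fps l - (carlitz_bernoulli_fps (l / 2) oo (fps_const 2 * fps_X)))"
proof -
  \<comment> \<open>\<open>1/(E - 1) - 2/(E\<^sup>2 - 1) = 1/(E + 1)\<close>, multiplied through by \<open>E\<^sup>2 - 1\<close>\<close>
  let ?E = "deg_exp_fps l"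
  define W where "W = inverse (1 - fps_const (- 1 / 2) * (?E - 1))"
  define B where "B = carlitz_bernoulli_fps l"
  define B' where "B' = carlitz_bernoulli_fps (l / 2) oo (fps_const 2 * fps_X)"
  have "fps_nth (1 - fps_const (- 1 / 2) * (?E - 1)) 0 \<noteq> 0"
    by simp
  then have "W * (1 - fps_const (- 1 / 2) * (?E - 1)) = 1"
    unfolding W_def by (rule inverse_mult_eq_1)
  moreover have "(1 - fps_const (- 1 / 2) * (?E - 1)) * 2 = ?E + 1"
    by (rule fps_ext) (simp add: numeral_fps_const)
  ultimately have W: "W * (?E + 1) = 2"
    by (metis mult.assoc mult_1)
  have B: "(?E - 1) * B = fps_X"
    unfolding B_def by (rule deg_exp_fps_minus_1_times_carlitz_bernoulli_fps[OF assms])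
  have "((deg_exp_fps (l / 2) - 1) * carlitz_bernoulli_fps (l / 2)) oo (fps_const 2 * fps_X)
      = fps_X oo (fps_const 2 * fps_X)"
    using assms by (simp add: deg_exp_fps_minus_1_times_carlitz_bernoulli_fps)
  then have B': "(?E ^ 2 - 1) * B' = 2 * fps_X"
    unfolding B'_def
    by (simp add: fps_compose_mult_distrib fps_compose_sub_distrib
        deg_exp_fps_power2[OF assms, symmetric] numeral_fps_const)
  have "?E ^ 2 - 1 = (?E - 1) * (?E + 1)"
    by (simp add: algebra_simps power2_eq_square)
  then have nz: "?E ^ 2 - 1 \<noteq> 0"
    using deg_exp_fps_minus_1_nonzero[OF assms] deg_exp_fps_plus_1_nonzero by simp
  have "(?E ^ 2 - 1) * (fps_X * W) = (?E - 1) * fps_X * (W * (?E + 1))"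
    by (simp add: algebra_simps power2_eq_square)
  also have "\<dots> = (?E + 1) * ((?E - 1) * B) * 2 - (?E ^ 2 - 1) * B' * 2"
    by (simp only: W B B') (simp add: algebra_simps power2_eq_square)
  also have "\<dots> = (?E ^ 2 - 1) * (2 * (B - B'))"
    by (simp add: algebra_simps power2_eq_square)
  finally show ?thesis
    using nz by (simp add: W_def B_def B'_def)
qed

theorem theorem8:
  fixes lam :: real and n :: nat
  assumes "lam \<noteq> 0"
  shows "(\<Sum>k\<le>n. deg_stirling2 lam n k * (1/2) ^ k * (-1) ^ k * fact k) = deg_geom lam n (-1/2)
       \<and> deg_geom lam n (-1/2)
           = 2 / (real n + 1) * (carlitz_bernoulli lam (n+1) - 2 ^ (n+1) * carlitz_bernoulli (lam/2) (n+1))"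
proof
  have "(1 / 2) ^ k * (- 1) ^ k = (- 1 / 2 :: real) ^ k" for k
    by (simp add: power_mult_distrib[symmetric])
  then show "(\<Sum>k\<le>n. deg_stirling2 lam n k * (1/2) ^ k * (-1) ^ k * fact k) = deg_geom lam n (-1/2)"
    unfolding deg_geom_def by (simp add: mult_ac)
next
  define W where "W = inverse (1 - fps_const (- 1 / 2) * (deg_exp_fps lam - 1))"
  have "deg_geom lam n (-1/2) = fact n * fps_nth (fps_X * W) (Suc n)"
    by (simp add: deg_geom_eq_fps_nth[OF assms] W_def)
  also have "fps_X * W
      = 2 * (carlitz_bernoulli_fps lam - (carlitz_bernoulli_fps (lam / 2) oo (fps_const 2 * fps_X)))"
    unfolding W_def by (rule carlitz_bernoulli_fps_duplication[OF assms])
  also have "fps_nth \<dots> (Suc n)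
      = 2 * (fps_nth (carlitz_bernoulli_fps lam) (Suc n)
             - 2 ^ Suc n * fps_nth (carlitz_bernoulli_fps (lam / 2)) (Suc n))"
    by (simp add: numeral_fps_const)
  also have "fact n * \<dots>
      = 2 / (real n + 1) * (carlitz_bernoulli lam (n+1) - 2 ^ (n+1) * carlitz_bernoulli (lam/2) (n+1))"
    using assms by (simp add: carlitz_bernoulli_eq_fps_nth field_simps)
  finally show "deg_geom lam n (-1/2)
      = 2 / (real n + 1) * (carlitz_bernoulli lam (n+1) - 2 ^ (n+1) * carlitz_bernoulli (lam/2) (n+1))" .
qed

end
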